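(* Let $\mathcal C$ be a concept hierarchy, $r_1,r_2,\epsilon\in[0,1]$, $a>0$ a real with $r_1\le ar_2(1-\epsilon)$, $m$ a positive integer, and let $\mathcal L$ be the network defined below with fixed sets $F$ and $E$ satisfying the stated constraints. Then for every $B\subseteq C_0$ presented at time 0 and every concept $c$ with $c\notin supp_{r_1}(B)$, no neuron $v\in reps(c)$ fires at time $level(c)$.
   Context: Concept hierarchies: fix positive integers $\ell_{max},n,k$. A universal set $D$ of concepts is partitioned into disjoint sets $D_0,\dots,D_{\ell_{max}}$ with $|D_0|=n$; $level(c)=\ell$ for $c\in D_\ell$. A concept hierarchy $\mathcal C$ consists of $C\subseteq D$, with $C_\ell=C\cap D_\ell$, and for each $c\in C_\ell$ with $1\le\ell\le\ell_{max}$ a set $children(c)\subseteq C_{\ell-1}$, such that $|C_{\ell_{max}}|=k$, $|children(c)|=k$ for all such $c$, and $children(c)\cap children(c')=\emptyset$ for distinct $c,c'\in C_\ell$. For $B\subseteq D_0$ and $r\in[0,1]$: $B(0)=B\cap C_0$; for $1\le\ell\le\ell_{max}$, $B(\ell)=\{c\in C_\ell:|children(c)\cap B(\ell-1)|\ge rk\}$; $supp_r(B)=\bigcup_{\ell}B(\ell)$. Network $\mathcal L$: neurons partitioned into layers $N_0,\dots,N_{\ell_{max}}$. Each $c\in D_0$ has a set $reps(c)$ of $m$ neurons in $N_0$, each $c\in C$ with $level(c)\ge1$ a set $reps(c)$ of $m$ neurons in $N_{level(c)}$, all pairwise disjoint. $E$ is a set of pairs $(u,v)$ with $v\in reps(c)$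 and $u\in reps(c')$ for some child $c'$ of $c$; for $u\in N_{\ell-1}$, $v\in N_\ell$, $w(u,v)=1$ iff $(u,v)\in E$, else $0$. Threshold $\tau=ar_2km(1-\epsilon)$. A fixed set $F$ of neurons is failed (failed neurons never fire). Constraints: for every concept $c$, at least $m(1-\epsilon)$ neurons of $reps(c)$ are not in $F$; and for every $c$ with $level(c)\ge1$, every $v\in reps(c)$ and every child $c'$ of $c$, there are at least $am(1-\epsilon)$ neurons $u\in reps(c')\setminus F$ with $(u,v)\in E$. Input $B\subseteq C_0$ presented at time 0: a layer-0 neuron fires at time 0 iff it is in $\bigcup_{b\in B}reps(b)\setminus F$, and no layer-0 neuron fires at any other time. A non-failed $v\in N_\ell$, $\ell\ge1$, does not fire at time 0 and fires at time $t\ge1$ iff $\sum_{u\in N_{\ell-1}}w(u,v)x_u(t-1)\ge\tau$, where $x_u(s)\in\{0,1\}$ indicates whether $u$ fires at time $s$. *)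

theory Defs
  imports Complex_Main
begin

definition concept_hierarchy ::
  "nat \<Rightarrow> nat \<Rightarrow> nat \<Rightarrow> 'c set \<Rightarrow> ('c \<Rightarrow> nat) \<Rightarrow> 'c set \<Rightarrow> ('c \<Rightarrow> 'c set) \<Rightarrow> bool" where
  "concept_hierarchy lmax n k D level C children \<longleftrightarrow>
     0 < lmax \<and> 0 < n \<and> 0 < k \<and>
     (\<forall>c\<in>D. level c \<le> lmax) \<and>
     finite {c\<in>D. level c = 0} \<and> card {c\<in>D. level c = 0} = n \<and>
     C \<subseteq> D \<and>
     finite {c\<in>C. level c = lmax} \<and> card {c\<in>C. level c = lmax} = k \<and>
     (\<forall>c\<in>C. 1 \<le> level c \<longrightarrow>
        children c \<subseteq> {c'\<in>C. level c' = level c - 1} \<and>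
        finite (children c) \<and> card (children c) = k) \<and>
     (\<forall>c\<in>C. \<forall>c'\<in>C. 1 \<le> level c \<and> level c = level c' \<and> c \<noteq> c' \<longrightarrow>
        children c \<inter> children c' = {})"

fun Blev :: "('c \<Rightarrow> nat) \<Rightarrow> 'c set \<Rightarrow> ('c \<Rightarrow> 'c set) \<Rightarrow> nat \<Rightarrow> real \<Rightarrow> 'c set \<Rightarrow> nat \<Rightarrow> 'c set" where
  "Blev level C children k r B 0 = B \<inter> {c\<in>C. level c = 0}"
| "Blev level C children k r B (Suc l) =
     {c\<in>C. level c = Suc l \<and> real (card (children c \<inter> Blev level C children k r B l)) \<ge> r * real k}"

definition supp ::
  "nat \<Rightarrow> ('c \<Rightarrow> nat) \<Rightarrow> 'c set \<Rightarrow> ('c \<Rightarrow> 'c set) \<Rightarrow> nat \<Rightarrow> real \<Rightarrow> 'c set \<Rightarrow> 'c set" where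
  "supp lmax level C children k r B = (\<Union>l\<in>{0..lmax}. Blev level C children k r B l)"

definition network ::
  "nat \<Rightarrow> 'c set \<Rightarrow> ('c \<Rightarrow> nat) \<Rightarrow> 'c set \<Rightarrow> ('c \<Rightarrow> 'c set) \<Rightarrow>
   'n set \<Rightarrow> ('n \<Rightarrow> nat) \<Rightarrow> ('c \<Rightarrow> 'n set) \<Rightarrow> nat \<Rightarrow> ('n \<times> 'n) set \<Rightarrow> bool" where
  "network lmax D level C children N layer reps m E \<longleftrightarrow>
     finite N \<and> (\<forall>v\<in>N. layer v \<le> lmax) \<and>
     (\<forall>c \<in> {c\<in>D. level c = 0} \<union> C.
        reps c \<subseteq> N \<and> finite (reps c) \<and> card (reps c) = m \<and> (\<forall>v\<in>reps c. layer v = level c)) \<and>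
     (\<forall>c \<in> {c\<in>D. level c = 0} \<union> C. \<forall>c' \<in> {c\<in>D. level c = 0} \<union> C.
        c \<noteq> c' \<longrightarrow> reps c \<inter> reps c' = {}) \<and>
     E \<subseteq> {(u, v). \<exists>c\<in>C. 1 \<le> level c \<and> v \<in> reps c \<and> (\<exists>c'\<in>children c. u \<in> reps c')}"

definition failure_constraints ::
  "'c set \<Rightarrow> ('c \<Rightarrow> nat) \<Rightarrow> 'c set \<Rightarrow> ('c \<Rightarrow> 'c set) \<Rightarrow>
   ('c \<Rightarrow> 'n set) \<Rightarrow> nat \<Rightarrow> ('n \<times> 'n) set \<Rightarrow> 'n set \<Rightarrow> real \<Rightarrow> real \<Rightarrow> bool" where
  "failure_constraints D level C children reps m E F a \<epsilon> \<longleftrightarrow>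
     (\<forall>c \<in> {c\<in>D. level c = 0} \<union> C. real (card (reps c - F)) \<ge> real m * (1 - \<epsilon>)) \<and>
     (\<forall>c\<in>C. 1 \<le> level c \<longrightarrow> (\<forall>v\<in>reps c. \<forall>c'\<in>children c.
        real (card {u \<in> reps c' - F. (u, v) \<in> E}) \<ge> a * real m * (1 - \<epsilon>)))"

definition weight :: "('n \<times> 'n) set \<Rightarrow> 'n \<Rightarrow> 'n \<Rightarrow> real" where
  "weight E u v = (if (u, v) \<in> E then 1 else 0)"

fun fires ::
  "'n set \<Rightarrow> ('n \<Rightarrow> nat) \<Rightarrow> ('c \<Rightarrow> 'n set) \<Rightarrow> ('n \<times> 'n) set \<Rightarrow> 'n set \<Rightarrow> real \<Rightarrow>
   'c set \<Rightarrow> nat \<Rightarrow> 'n \<Rightarrow> bool" where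
  "fires N layer reps E F \<tau> B 0 v \<longleftrightarrow>
     v \<in> N \<and> layer v = 0 \<and> v \<in> (\<Union>b\<in>B. reps b) - F"
| "fires N layer reps E F \<tau> B (Suc t) v \<longleftrightarrow>
     v \<in> N \<and> v \<notin> F \<and> 1 \<le> layer v \<and>
     (\<Sum>u\<in>{u\<in>N. layer u = layer v - 1}.
        weight E u v * (if fires N layer reps E F \<tau> B t u then 1 else 0)) \<ge> \<tau>"

end

theory Submission
  imports Defs
begin

text \<open>Induction on the level: a neuron of c that fires at time level c forces c \<in> B(level c).
  At level 0 only representatives of B fire. A neuron of c at level l+1 that fires at time l+1
  has at least \<tau> in-neighbours that fired at time l; each represents a child of c, which by
  induction lies in B(l). A child has only m representatives, so at least \<tau>/m \<ge> r1 k
  children of c lie in B(l), i.e. c \<in> B(l+1). Failed neurons only suppress firing.\<close>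

lemma sum_weight_indicator_eq_card:
  assumes "finite S"
  shows "(\<Sum>u\<in>S. weight E u v * (if P u then 1 else 0)) = real (card {u\<in>S. (u, v) \<in> E \<and> P u})"
proof -
  have "(\<Sum>u\<in>S. weight E u v * (if P u then 1 else 0))
      = (\<Sum>u\<in>S. if (u, v) \<in> E \<and> P u then 1 else 0)"
    by (rule sum.cong) (auto simp: weight_def)
  also have "\<dots> = real (card {u\<in>S. (u, v) \<in> E \<and> P u})"
    using assms by (simp add: sum.inter_filter[symmetric])
  finally show ?thesis .
qed

locale concept_network =
  fixes lmax n k :: nat
    and D :: "'c set" and level :: "'c \<Rightarrow> nat" and C :: "'c set" and children :: "'c \<Rightarrow> 'c set"
    and N :: "'n set" and layer :: "'n \<Rightarrow> nat" and reps :: "'c \<Rightarrow> 'n set" and m :: nat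
    and E :: "('n \<times> 'n) set"
  assumes hierarchy: "concept_hierarchy lmax n k D level C children"
    and network: "network lmax D level C children N layer reps m E"
begin

definition represented :: "'c set" where
  "represented = {c\<in>D. level c = 0} \<union> C"

lemma level_le_lmax: "c \<in> represented \<Longrightarrow> level c \<le> lmax"
  using hierarchy by (auto simp: concept_hierarchy_def represented_def)

lemma child_in_lower_level:
  "c \<in> C \<Longrightarrow> 1 \<le> level c \<Longrightarrow> c' \<in> children c \<Longrightarrow> c' \<in> C \<and> level c' = level c - 1"
  using hierarchy by (auto simp: concept_hierarchy_def)

lemma finite_children: "c \<in> C \<Longrightarrow> 1 \<le> level c \<Longrightarrow> finite (children c)"
  using hierarchy by (simp add: concept_hierarchy_def)

lemma finite_N: "finite N"
  using network by (simp add: network_def)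

lemma finite_reps: "c \<in> represented \<Longrightarrow> finite (reps c)"
  using network by (simp add: network_def represented_def)

lemma card_reps: "c \<in> represented \<Longrightarrow> card (reps c) = m"
  using network by (simp add: network_def represented_def)

lemma reps_disjoint:
  "c \<in> represented \<Longrightarrow> c' \<in> represented \<Longrightarrow> v \<in> reps c \<Longrightarrow> v \<in> reps c' \<Longrightarrow> c = c'"
  using network unfolding network_def represented_def by blast

lemma edge_from_child:
  assumes "(u, v) \<in> E" and "c \<in> represented" and "v \<in> reps c"
  shows "\<exists>c'\<in>children c. u \<in> reps c'"
proof -
  obtain c'' where "c'' \<in> C" "v \<in> reps c''" "\<exists>c'\<in>children c''. u \<in> reps c'"
    using assms(1) network unfolding network_def by blast
  moreover have "c'' = c"
    using reps_disjoint[of c'' c v] \<open>c'' \<in> C\<close> \<open>v \<in> reps c''\<close> assms(2,3)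
    by (simp add: represented_def)
  ultimately show ?thesis by simp
qed

lemma card_UN_reps_le:
  assumes "finite X" and "X \<subseteq> represented"
  shows "card (\<Union>c\<in>X. reps c) \<le> m * card X"
proof -
  have "card (\<Union>c\<in>X. reps c) \<le> (\<Sum>c\<in>X. card (reps c))"
    using assms(1) by (rule card_UN_le)
  also have "\<dots> = m * card X"
    using assms(2) by (simp add: card_reps subset_iff)
  finally show ?thesis .
qed

lemma fires_0_imp_mem:
  assumes "B \<subseteq> represented" and "c \<in> represented" and "v \<in> reps c"
    and "fires N layer reps E F \<tau> B 0 v"
  shows "c \<in> B"
  using assms reps_disjoint by auto

lemma threshold_le_card_firing_inputs:
  assumes "fires N layer reps E F \<tau> B (Suc t) v"
  shows "\<tau> \<le> real (card {u \<in> {u\<in>N. layer u = layer v - 1}.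
                        (u, v) \<in> E \<and> fires N layer reps E F \<tau> B t u})"
  using assms finite_N by (simp add: sum_weight_indicator_eq_card)

lemma fires_imp_Blev:
  assumes B: "B \<subseteq> {c\<in>C. level c = 0}" and m: "0 < m" and \<tau>: "real m * (r * real k) \<le> \<tau>"
  shows "c \<in> represented \<Longrightarrow> v \<in> reps c \<Longrightarrow> fires N layer reps E F \<tau> B (level c) v
    \<Longrightarrow> c \<in> Blev level C children k r B (level c)"
proof (induction "level c" arbitrary: c v)
  case 0
  have "B \<subseteq> represented" using B by (auto simp: represented_def)
  with 0 have "c \<in> B" by (intro fires_0_imp_mem[of B c v F \<tau>]) simp_all
  with B 0 show ?case by auto
next
  case (Suc l)
  let ?Bl = "Blev level C children k r B l"
  let ?inputs = "{u \<in> {u\<in>N. layer u = layer v - 1}.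
                   (u, v) \<in> E \<and> fires N layer reps E F \<tau> B l u}"
  have c_C: "c \<in> C"
    using Suc.prems(1) Suc.hyps(2) by (auto simp: represented_def)
  have inputs_sub: "?inputs \<subseteq> (\<Union>c'\<in>children c \<inter> ?Bl. reps c')"
  proof
    fix u assume "u \<in> ?inputs"
    then have "(u, v) \<in> E" and fires_u: "fires N layer reps E F \<tau> B l u" by auto
    then obtain c' where c': "c' \<in> children c" "u \<in> reps c'"
      using edge_from_child Suc.prems(1,2) by blast
    have "c' \<in> C" "level c' = l"
      using child_in_lower_level[OF c_C _ c'(1)] Suc.hyps(2) by auto
    then have "c' \<in> ?Bl"
      using Suc.hyps(1)[of c' u] c'(2) fires_u by (simp add: represented_def)
    with c' show "u \<in> (\<Union>c'\<in>children c \<inter> ?Bl. reps c')" by blast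
  qed
  have children_fin: "finite (children c \<inter> ?Bl)"
    using finite_children[OF c_C] Suc.hyps(2) by simp
  have children_rep: "children c \<inter> ?Bl \<subseteq> represented"
    using child_in_lower_level[OF c_C] Suc.hyps(2) by (auto simp: represented_def)
  have "real m * (r * real k) \<le> \<tau>" by (fact \<tau>)
  also have "\<tau> \<le> real (card ?inputs)"
    using threshold_le_card_firing_inputs Suc.prems(3)[folded Suc.hyps(2)] .
  also have "card ?inputs \<le> card (\<Union>c'\<in>children c \<inter> ?Bl. reps c')"
    using inputs_sub children_fin children_rep finite_reps by (intro card_mono) auto
  also have "\<dots> \<le> m * card (children c \<inter> ?Bl)"
    using children_fin children_rep by (rule card_UN_reps_le)
  finally have "r * real k \<le> real (card (children c \<inter> ?Bl))"
    using m by simp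
  with c_C Suc.hyps(2)[symmetric] show ?case by simp
qed

end

theorem theorem8p4:
  fixes lmax n k m :: nat
    and D C :: "'c set" and level :: "'c \<Rightarrow> nat" and children :: "'c \<Rightarrow> 'c set"
    and N F :: "'n set" and layer :: "'n \<Rightarrow> nat" and reps :: "'c \<Rightarrow> 'n set"
    and E :: "('n \<times> 'n) set"
    and r1 r2 \<epsilon> a :: real
    and B :: "'c set" and c :: 'c and v :: 'n
  assumes hier: "concept_hierarchy lmax n k D level C children"
    and r1: "0 \<le> r1" "r1 \<le> 1" and r2: "0 \<le> r2" "r2 \<le> 1"
    and eps: "0 \<le> \<epsilon>" "\<epsilon> \<le> 1"
    and a: "0 < a" and r1_le: "r1 \<le> a * r2 * (1 - \<epsilon>)"
    and m: "0 < m"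
    and net: "network lmax D level C children N layer reps m E"
    and fail: "failure_constraints D level C children reps m E F a \<epsilon>"
    and B: "B \<subseteq> {c\<in>C. level c = 0}"
    and c: "c \<in> {c\<in>D. level c = 0} \<union> C"
    and c_notin: "c \<notin> supp lmax level C children k r1 B"
    and v: "v \<in> reps c"
  shows "\<not> fires N layer reps E F (a * r2 * real k * real m * (1 - \<epsilon>)) B (level c) v"
proof
  interpret concept_network lmax n k D level C children N layer reps m E
    using hier net by unfold_locales
  have "real m * (r1 * real k) \<le> real m * (a * r2 * (1 - \<epsilon>) * real k)"
    using r1_le by (intro mult_left_mono mult_right_mono) auto
  also have "\<dots> = a * r2 * real k * real m * (1 - \<epsilon>)"
    by (simp add: ac_simps)
  finally have threshold: "real m * (r1 * real k) \<le> a * r2 * real k * real m * (1 - \<epsilon>)" .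
  assume "fires N layer reps E F (a * r2 * real k * real m * (1 - \<epsilon>)) B (level c) v"
  then have "c \<in> Blev level C children k r1 B (level c)"
    using fires_imp_Blev[OF B m threshold] c v by (simp add: represented_def)
  moreover have "level c \<le> lmax"
    using level_le_lmax c by (simp add: represented_def)
  ultimately show False
    using c_notin by (auto simp: supp_def)
qed

end
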